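(* Let $\mu_1,\mu_2$, $P_{n,m}$, the shifted step-line polynomials $p_n^{(0,k)}$, their recurrence coefficients $\beta_n^{(0,k)},\gamma_n^{(0,k)},\delta_n^{(0,k)}$ and the numbers $c_n^{(0,k)}$ be as in the context. Then for all $k\ge 0$: \begin{align*} \beta_{2n+k}^{(0,k+1)} &= \beta_{2n+k}^{(0,k)} + c_n^{(0,k)}, && n\ge 0,\\ \gamma_{2n+k}^{(0,k+1)} &= \gamma_{2n+k}^{(0,k)}, && n\ge 1,\\ \delta_{2n+k}^{(0,k+1)} &= \delta_{2n+k}^{(0,k)} + c_{n-1}^{(0,k)}\gamma_{2n+k}^{(0,k)}, && n\ge 1, \end{align*} and \begin{align*} \beta_{2n+k+1}^{(0,k+1)} &= \beta_{2n+k+1}^{(0,k)} - c_n^{(0,k)}, && n\ge 0,\\ \gamma_{2n+k+1}^{(0,k+1)} &= \gamma_{2n+k+1}^{(0,k)} - c_n^{(0,k)}\bigl(\beta_{2n+k}^{(0,k)}-\beta_{2n+k+1}^{(0,k+1)}\bigr), && n\ge 0,\\ \delta_{2n+k+1}^{(0,k+1)} &= \delta_{2n+k+1}^{(0,k)} - c_n^{(0,k)}\gamma_{2n+k}^{(0,k)}, && n\ge 1, \end{align*} where $(c_n^{(0,k)})_{n\ge 0}$ is the solution of the Riccati type difference equation \[ c_n^{(0,k)} = \frac{c_{n-1}^{(0,k)}\,\delta_{2n+k+1}^{(0,k)}}{\delta_{2n+k}^{(0,k)} + c_{n-1}^{(0,k)}\gamma_{2n+k}^{(0,k)}}, \qquad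 n\ge 1, \] with initial condition $c_0^{(0,k)} = \delta_{k+1}^{(0,k)}/\gamma_k^{(0,k)}$ for $k\ge 1$, while for $k=0$ the value $c_0^{(0,0)}$ is a free parameter (not given by such a formula).
   Context: Let $\mu_1,\mu_2$ be positive Borel measures on $\mathbb{R}$ with all moments finite, forming a normal system: for every $(n,m)\in\mathbb{N}^2$ ($\mathbb{N}=\{0,1,2,\dots\}$) there is a unique monic polynomial $P_{n,m}$ of degree $n+m$ with $\int x^k P_{n,m}(x)\,d\mu_1(x)=0$ for $0\le k\le n-1$ and $\int x^k P_{n,m}(x)\,d\mu_2(x)=0$ for $0\le k\le m-1$. Set $P_{n,m}=0$ if $n<0$ or $m<0$. For $k\ge 0$ define the shifted step-line polynomials $p_{2n+k}^{(0,k)}=P_{n,n+k}$ and $p_{2n+k+1}^{(0,k)}=P_{n+1,n+k}$ for $n\ge -1$ (with the convention above, so $p_{k-1}^{(0,k)}=P_{0,k-1}$ and $p_{k-2}^{(0,k)}=0$). For $n\ge k$ they satisfy the four-term recurrence \[ x p_n^{(0,k)}(x) = p_{n+1}^{(0,k)}(x) + \beta_n^{(0,k)} p_n^{(0,k)}(x) + \gamma_n^{(0,k)} p_{n-1}^{(0,k)}(x) + \delta_n^{(0,k)} p_{n-2}^{(0,k)}(x), \] which defines the real numbers $\beta_n^{(0,k)},\gamma_n^{(0,k)},\delta_n^{(0,k)}$ for $n\ge k$ (coefficients multiplying the zero polynomial are set to $0$). In addition, for $k\ge 0$, $\beta_k^{(0,k+1)}$ denotes the constant such that $xP_{0,k}(x)-P_{0,k+1}(x)-\beta_k^{(0,k+1)}P_{0,k}(x)$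 has degree less than $k$. For $k=0$ one gets the step-line polynomials $p_{2n}=P_{n,n}$, $p_{2n+1}=P_{n+1,n}$ with coefficients $\beta_n=\beta_n^{(0,0)}$, $\gamma_n=\gamma_n^{(0,0)}$, $\delta_n=\delta_n^{(0,0)}$. For $k\ge 0$ and $n\ge 0$, $c_n^{(0,k)}$ denotes the constant such that $P_{n+1,n+k}(x)-P_{n,n+k+1}(x)=c_n^{(0,k)}P_{n,n+k}(x)$ (such a constant exists). *)

theory Defs
  imports "HOL-Analysis.Analysis" "HOL-Computational_Algebra.Polynomial"
begin

definition moments_finite :: "real measure \<Rightarrow> bool" where
  "moments_finite \<mu> \<longleftrightarrow> (\<forall>k::nat. integrable \<mu> (\<lambda>x. x ^ k))"

definition is_mop :: "real measure \<Rightarrow> real measure \<Rightarrow> nat \<Rightarrow> nat \<Rightarrow> real poly \<Rightarrow> bool" where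
  "is_mop \<mu>1 \<mu>2 n m P \<longleftrightarrow> lead_coeff P = 1 \<and> degree P = n + m
     \<and> (\<forall>k<n. (\<integral>x. x ^ k * poly P x \<partial>\<mu>1) = 0)
     \<and> (\<forall>k<m. (\<integral>x. x ^ k * poly P x \<partial>\<mu>2) = 0)"

definition normal_system :: "real measure \<Rightarrow> real measure \<Rightarrow> bool" where
  "normal_system \<mu>1 \<mu>2 \<longleftrightarrow> (\<forall>n m. \<exists>!P. is_mop \<mu>1 \<mu>2 n m P)"

definition mop :: "real measure \<Rightarrow> real measure \<Rightarrow> int \<Rightarrow> int \<Rightarrow> real poly" where
  "mop \<mu>1 \<mu>2 n m = (if n < 0 \<or> m < 0 then 0 else (THE P. is_mop \<mu>1 \<mu>2 (nat n) (nat m) P))"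

text \<open>Shifted step-line polynomials p_j^{(0,k)}: p_{2n+k} = P_{n,n+k}, p_{2n+k+1} = P_{n+1,n+k}
  (meaningful for j \<ge> k - 2).\<close>
definition slp :: "real measure \<Rightarrow> real measure \<Rightarrow> nat \<Rightarrow> int \<Rightarrow> real poly" where
  "slp \<mu>1 \<mu>2 k j = (let t = j - int k in
      if even t then mop \<mu>1 \<mu>2 (t div 2) (t div 2 + int k)
      else mop \<mu>1 \<mu>2 (t div 2 + 1) (t div 2 + int k))"

text \<open>Recurrence coefficients (beta, gamma, delta) of the four-term recurrence, for n \<ge> k;
  coefficients multiplying the zero polynomial are 0.\<close>
definition rec_coeffs :: "real measure \<Rightarrow> real measure \<Rightarrow> nat \<Rightarrow> nat \<Rightarrow> real \<times> real \<times> real" where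
  "rec_coeffs \<mu>1 \<mu>2 k n = (THE (b, g, d).
      [:0, 1:] * slp \<mu>1 \<mu>2 k (int n) =
        slp \<mu>1 \<mu>2 k (int n + 1) + smult b (slp \<mu>1 \<mu>2 k (int n))
        + smult g (slp \<mu>1 \<mu>2 k (int n - 1)) + smult d (slp \<mu>1 \<mu>2 k (int n - 2))
      \<and> (slp \<mu>1 \<mu>2 k (int n - 1) = 0 \<longrightarrow> g = 0)
      \<and> (slp \<mu>1 \<mu>2 k (int n - 2) = 0 \<longrightarrow> d = 0))"

text \<open>beta_n^{(0,k)}: for n \<ge> k from the recurrence; for n = k - 1 (k \<ge> 1) the special constant
  beta_{k-1}^{(0,k)} such that x P_{0,k-1} - P_{0,k} - beta P_{0,k-1} has degree < k - 1.\<close>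
definition beta :: "real measure \<Rightarrow> real measure \<Rightarrow> nat \<Rightarrow> nat \<Rightarrow> real" where
  "beta \<mu>1 \<mu>2 k n = (if k \<le> n then fst (rec_coeffs \<mu>1 \<mu>2 k n)
     else if Suc n = k then
       (THE b. let r = [:0, 1:] * mop \<mu>1 \<mu>2 0 (int n) - mop \<mu>1 \<mu>2 0 (int n + 1)
                        - smult b (mop \<mu>1 \<mu>2 0 (int n))
               in r = 0 \<or> degree r < n)
     else 0)"

definition gamma :: "real measure \<Rightarrow> real measure \<Rightarrow> nat \<Rightarrow> nat \<Rightarrow> real" where
  "gamma \<mu>1 \<mu>2 k n = fst (snd (rec_coeffs \<mu>1 \<mu>2 k n))"

definition delta :: "real measure \<Rightarrow> real measure \<Rightarrow> nat \<Rightarrow> nat \<Rightarrow> real" where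
  "delta \<mu>1 \<mu>2 k n = snd (snd (rec_coeffs \<mu>1 \<mu>2 k n))"

definition cc :: "real measure \<Rightarrow> real measure \<Rightarrow> nat \<Rightarrow> nat \<Rightarrow> real" where
  "cc \<mu>1 \<mu>2 k n = (THE c. mop \<mu>1 \<mu>2 (int n + 1) (int n + int k) - mop \<mu>1 \<mu>2 (int n) (int n + int k + 1)
                      = smult c (mop \<mu>1 \<mu>2 (int n) (int n + int k)))"

end

theory Submission
  imports Defs
begin

text \<open>
  Normality means that a polynomial of degree \<open>< n + m\<close> annihilating the first \<open>n\<close> moments
  of \<open>\<mu>1\<close> and the first \<open>m\<close> moments of \<open>\<mu>2\<close> is zero. Hence any expansion of \<open>x p\<^sub>j\<close>
  in the step-line polynomials is the recurrence, and its coefficients can be read off by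
  comparing degrees. The step line \<open>(0, k + 1)\<close> is linked to \<open>(0, k)\<close> by
  \<open>P(n + 1, n + k) = P(n, n + k + 1) + c\<^sub>n P(n, n + k)\<close>; substituting this into the \<open>(0, k)\<close>
  recurrence yields expansions of \<open>x\<close> times the \<open>(0, k + 1)\<close> polynomials. At odd positions an extra
  multiple of \<open>P(n - 1, n + k - 1)\<close> appears; it annihilates more moments than its degree allows,
  so it vanishes, and this is the Riccati equation for \<open>c\<^sub>n\<close> (for \<open>n = 0\<close>, the initial
  condition). The denominators are nonzero, again by normality: otherwise \<open>x P(a, b)\<close> would
  annihilate the first \<open>b\<close> moments of \<open>\<mu>2\<close>, and then \<open>P(a, b)\<close> the first \<open>b + 1\<close>.
\<close>

definition vanishing_moments :: "real measure \<Rightarrow> nat \<Rightarrow> real poly \<Rightarrow> bool" where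
  "vanishing_moments \<mu> m q \<longleftrightarrow> (\<forall>j<m. (\<integral>x. x ^ j * poly q x \<partial>\<mu>) = 0)"

lemma integrable_monomial_times_poly:
  assumes "moments_finite \<mu>" shows "integrable \<mu> (\<lambda>x. x ^ j * poly q x)"
proof -
  let ?p = "monom 1 j * q"
  have "integrable \<mu> (\<lambda>x. \<Sum>i\<le>degree ?p. coeff ?p i * x ^ i)"
    using assms unfolding moments_finite_def
    by (intro Bochner_Integration.integrable_sum integrable_mult_right) blast
  moreover have "poly ?p = (\<lambda>x. x ^ j * poly q x)" by (simp add: fun_eq_iff poly_monom)
  ultimately show ?thesis unfolding poly_altdef by simp
qed

lemma vanishing_moments_0 [simp]: "vanishing_moments \<mu> m 0"
  by (simp add: vanishing_moments_def)

lemma vanishing_moments_add: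
  "moments_finite \<mu> \<Longrightarrow> vanishing_moments \<mu> m p \<Longrightarrow> vanishing_moments \<mu> m q
    \<Longrightarrow> vanishing_moments \<mu> m (p + q)"
  by (simp add: vanishing_moments_def distrib_left integrable_monomial_times_poly)

lemma vanishing_moments_diff:
  "moments_finite \<mu> \<Longrightarrow> vanishing_moments \<mu> m p \<Longrightarrow> vanishing_moments \<mu> m q
    \<Longrightarrow> vanishing_moments \<mu> m (p - q)"
  by (simp add: vanishing_moments_def right_diff_distrib integrable_monomial_times_poly)

lemma vanishing_moments_smult: "vanishing_moments \<mu> m p \<Longrightarrow> vanishing_moments \<mu> m (smult c p)"
  by (simp add: vanishing_moments_def mult.left_commute)

lemma vanishing_moments_mono: "vanishing_moments \<mu> m p \<Longrightarrow> m' \<le> m \<Longrightarrow> vanishing_moments \<mu> m' p"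
  by (simp add: vanishing_moments_def)

lemma integral_monomial_times_x_poly:
  fixes \<mu> :: "real measure"
  shows
  "(\<integral>x. x ^ j * poly ([:0, 1:] * q) x \<partial>\<mu>) = (\<integral>x. x ^ Suc j * poly q x \<partial>\<mu>)"
  by (rule Bochner_Integration.integral_cong) (simp_all add: ac_simps)

lemma vanishing_moments_x_mult:
  "vanishing_moments \<mu> m q \<Longrightarrow> vanishing_moments \<mu> (m - 1) ([:0, 1:] * q)"
  unfolding vanishing_moments_def integral_monomial_times_x_poly
  by (simp del: power_Suc)

lemma vanishing_moments_Suc_of_x_mult:
  assumes "0 < m" "vanishing_moments \<mu> m q" "vanishing_moments \<mu> m ([:0, 1:] * q)"
  shows "vanishing_moments \<mu> (Suc m) q"
  unfolding vanishing_moments_def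
proof (intro allI impI)
  fix j assume "j < Suc m"
  then show "(\<integral>x. x ^ j * poly q x \<partial>\<mu>) = 0"
    using assms unfolding vanishing_moments_def integral_monomial_times_x_poly
    by (cases j) (auto simp del: power_Suc)
qed

definition degree_below :: "'a::zero poly \<Rightarrow> nat \<Rightarrow> bool" where
  "degree_below q d \<longleftrightarrow> (\<forall>i\<ge>d. coeff q i = 0)"

lemma degree_below_iff: "degree_below q d \<longleftrightarrow> q = 0 \<or> degree q < d"
  unfolding degree_below_def
  by (metis coeff_0 coeff_eq_0 leD le_less_trans leading_coeff_0_iff not_le_imp_less)

lemma degree_below_0 [simp]: "degree_below 0 d"
  by (simp add: degree_below_def)

lemma degree_below_diff:
    "degree_below p d \<Longrightarrow> degree_below (q :: 'a::ab_group_add poly) d \<Longrightarrow> degree_below (p - q) d"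
  and degree_below_smult: "degree_below r d \<Longrightarrow> degree_below (smult c r) d"
  and degree_below_mono: "degree_below p d \<Longrightarrow> d \<le> e \<Longrightarrow> degree_below p e"
  by (simp_all add: degree_below_def)

lemma degree_below_of_degree: "degree p < d \<Longrightarrow> degree_below p d"
  by (simp add: degree_below_iff)

lemma degree_below_monic_diff:
  assumes "lead_coeff p = 1" "lead_coeff q = 1" "degree p = d" "degree q = d"
  shows "degree_below (p - q) d"
  unfolding degree_below_def
proof (intro allI impI)
  fix i assume "d \<le> i"
  then show "coeff (p - q) i = 0" using assms by (cases "i = d") (simp_all add: coeff_eq_0)
qed

lemma degree_below_reduce:
  fixes r p :: "'a::comm_ring_1 poly"
  assumes "degree_below r (Suc d)" "lead_coeff p = 1" "degree p = d"
  shows "degree_below (r - smult (coeff r d) p) d"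
  unfolding degree_below_def
proof (intro allI impI)
  fix i assume "d \<le> i"
  then show "coeff (r - smult (coeff r d) p) i = 0"
    using assms by (cases "i = d") (auto simp: degree_below_def coeff_eq_0)
qed

lemma degree_below_reduce_max:
  fixes r p :: "'a::comm_ring_1 poly"
  assumes "degree_below r (max L M)" "L < M \<Longrightarrow> lead_coeff p = 1 \<and> Suc (degree p) = M"
  shows "\<exists>c. degree_below (r - smult c p) (max L (M - 1))"
proof (cases "L < M")
  case True
  then have "degree_below (r - smult (coeff r (degree p)) p) (degree p)"
    using assms by (intro degree_below_reduce) auto
  then show ?thesis using True assms(2) by (auto intro: degree_below_mono)
next
  case False
  then show ?thesis using assms(1) by (intro exI[of _ 0]) (auto intro: degree_below_mono)
qed

lemma smult_combination_unique:
  fixes B C D :: "'a::idom poly"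
  assumes eq: "smult b B + smult g C + smult d D = smult b' B + smult g' C + smult d' D"
    and "B \<noteq> 0" and C: "C \<noteq> 0 \<Longrightarrow> Suc (degree C) = degree B"
    and D: "D \<noteq> 0 \<Longrightarrow> Suc (Suc (degree D)) = degree B"
  shows "b = b' \<and> (C \<noteq> 0 \<longrightarrow> g = g') \<and> (D \<noteq> 0 \<longrightarrow> d = d')"
proof -
  have z: "smult (b - b') B + smult (g - g') C + smult (d - d') D = 0"
    using eq by (simp add: algebra_simps smult_diff_left)
  have "coeff C (degree B) = 0" using C by (metis coeff_0 coeff_eq_0 lessI)
  moreover have "coeff D (degree B) = 0" using D by (metis coeff_0 coeff_eq_0 lessI less_SucI)
  ultimately have "(b - b') * lead_coeff B = 0" using arg_cong[OF z, of "\<lambda>p. coeff p (degree B)"] by simp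
  then have bb: "b = b'" using \<open>B \<noteq> 0\<close> by simp
  have gg: "g = g'" if "C \<noteq> 0"
  proof -
    have "coeff D (degree C) = 0" using C D that by (cases "D = 0") (auto intro: coeff_eq_0)
    then have "(g - g') * lead_coeff C = 0"
      using arg_cong[OF z, of "\<lambda>p. coeff p (degree C)"] bb by simp
    then show ?thesis using that by simp
  qed
  have "d = d'" if "D \<noteq> 0"
  proof -
    have "smult (d - d') D = 0" using z bb gg by (cases "C = 0") auto
    then show ?thesis using that by simp
  qed
  with bb gg show ?thesis by blast
qed

lemma smult_right_cancel:
  fixes p :: "'a::idom poly"
  assumes "p \<noteq> 0" shows "smult a p = smult b p \<longleftrightarrow> a = b"
proof -
  have "smult a p = smult b p \<longleftrightarrow> smult (a - b) p = 0" by (simp add: smult_diff_left)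
  then show ?thesis using assms by simp
qed

definition multi_orth :: "real measure \<Rightarrow> real measure \<Rightarrow> nat \<Rightarrow> nat \<Rightarrow> real poly \<Rightarrow> bool" where
  "multi_orth \<mu>1 \<mu>2 n m q \<longleftrightarrow> vanishing_moments \<mu>1 n q \<and> vanishing_moments \<mu>2 m q"

lemma is_mop_iff:
  "is_mop \<mu>1 \<mu>2 n m p \<longleftrightarrow> lead_coeff p = 1 \<and> degree p = n + m \<and> multi_orth \<mu>1 \<mu>2 n m p"
  by (simp add: is_mop_def multi_orth_def vanishing_moments_def)

lemma multi_orth_0 [simp]: "multi_orth \<mu>1 \<mu>2 n m 0"
  by (simp add: multi_orth_def)

lemma multi_orth_mono:
  "multi_orth \<mu>1 \<mu>2 n m p \<Longrightarrow> n' \<le> n \<Longrightarrow> m' \<le> m \<Longrightarrow> multi_orth \<mu>1 \<mu>2 n' m' p"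
  by (auto simp: multi_orth_def intro: vanishing_moments_mono)

lemma multi_orth_x_mult:
  "multi_orth \<mu>1 \<mu>2 n m p \<Longrightarrow> multi_orth \<mu>1 \<mu>2 (n - 1) (m - 1) ([:0, 1:] * p)"
  unfolding multi_orth_def by (blast intro: vanishing_moments_x_mult)

locale normal_pair =
  fixes \<mu>1 \<mu>2 :: "real measure"
  assumes moments_finite1: "moments_finite \<mu>1" and moments_finite2: "moments_finite \<mu>2"
    and normal: "normal_system \<mu>1 \<mu>2"
begin

abbreviation "orth \<equiv> multi_orth \<mu>1 \<mu>2"
abbreviation "P \<equiv> mop \<mu>1 \<mu>2"
abbreviation "S \<equiv> slp \<mu>1 \<mu>2"
abbreviation "\<beta> \<equiv> beta \<mu>1 \<mu>2"
abbreviation "\<gamma> \<equiv> gamma \<mu>1 \<mu>2"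
abbreviation "\<delta> \<equiv> delta \<mu>1 \<mu>2"
abbreviation "c \<equiv> cc \<mu>1 \<mu>2"

lemma orth_add: "orth n m p \<Longrightarrow> orth n m q \<Longrightarrow> orth n m (p + q)"
  and orth_diff: "orth n m p \<Longrightarrow> orth n m q \<Longrightarrow> orth n m (p - q)"
  and orth_smult: "orth n m p \<Longrightarrow> orth n m (smult a p)"
  using moments_finite1 moments_finite2
  by (auto simp: multi_orth_def vanishing_moments_add vanishing_moments_diff vanishing_moments_smult)

lemma orth_degree_below_eq_0:
  assumes "orth n m q" "degree_below q (n + m)" shows "q = 0"
proof (rule ccontr)
  assume "q \<noteq> 0"
  obtain p where p: "is_mop \<mu>1 \<mu>2 n m p" and unique: "\<And>p'. is_mop \<mu>1 \<mu>2 n m p' \<Longrightarrow> p' = p"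
    using normal unfolding normal_system_def by metis
  have p': "lead_coeff p = 1" "degree p = n + m" "orth n m p" using p unfolding is_mop_iff by blast+
  have "degree q < degree p" using p' assms(2) \<open>q \<noteq> 0\<close> by (simp add: degree_below_iff)
  then have "lead_coeff (p + q) = 1" "degree (p + q) = n + m"
    using p' lead_coeff_add_le[of q p] by (simp_all add: add.commute degree_add_eq_left)
  then have "is_mop \<mu>1 \<mu>2 n m (p + q)" using p' assms(1) by (simp add: is_mop_iff orth_add)
  then show False using unique \<open>q \<noteq> 0\<close> by force
qed

lemma mop_eq_0: "a < 0 \<or> b < 0 \<Longrightarrow> P a b = 0"
  by (simp add: mop_def)

lemma is_mop_mop: "0 \<le> a \<Longrightarrow> 0 \<le> b \<Longrightarrow> is_mop \<mu>1 \<mu>2 (nat a) (nat b) (P a b)"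
  using normal unfolding normal_system_def mop_def by (simp add: theI')

lemma lead_coeff_mop: "0 \<le> a \<Longrightarrow> 0 \<le> b \<Longrightarrow> lead_coeff (P a b) = 1"
  and degree_mop: "0 \<le> a \<Longrightarrow> 0 \<le> b \<Longrightarrow> degree (P a b) = nat a + nat b"
  using is_mop_mop unfolding is_mop_iff by blast+

lemma monic_mop:
  assumes "0 \<le> a" "0 \<le> b" "a + b = int N" shows "lead_coeff (P a b) = 1 \<and> degree (P a b) = N"
  using assms lead_coeff_mop[OF assms(1,2)] degree_mop[OF assms(1,2)] by arith

lemma mop_nonzero: "0 \<le> a \<Longrightarrow> 0 \<le> b \<Longrightarrow> P a b \<noteq> 0"
  using lead_coeff_mop by force

lemma orth_mop: "orth (nat a) (nat b) (P a b)"
  using is_mop_mop[of a b] mop_eq_0[of a b] by (cases "0 \<le> a \<and> 0 \<le> b") (auto simp: is_mop_iff)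

lemma orth_mop_mono: "n \<le> nat a \<Longrightarrow> m \<le> nat b \<Longrightarrow> orth n m (P a b)"
  using multi_orth_mono[OF orth_mop] .

lemma x_mop_not_orth:
  assumes "0 \<le> a" "0 < b" shows "\<not> orth (nat a - 1) (nat b) ([:0, 1:] * P a b)"
proof
  assume x_orth: "orth (nat a - 1) (nat b) ([:0, 1:] * P a b)"
  have "vanishing_moments \<mu>2 (Suc (nat b)) (P a b)"
    using assms x_orth orth_mop[of a b] unfolding multi_orth_def
    by (intro vanishing_moments_Suc_of_x_mult) auto
  then have "orth (nat a) (Suc (nat b)) (P a b)"
    using orth_mop[of a b] by (simp add: multi_orth_def)
  moreover have "degree_below (P a b) (nat a + Suc (nat b))"
    using assms by (simp add: degree_below_of_degree degree_mop)
  ultimately have "P a b = 0" by (rule orth_degree_below_eq_0)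
  then show False using assms mop_nonzero by simp
qed

lemma slp_eq_mop: "S k j = P ((j - int k + 1) div 2) ((j - int k) div 2 + int k)"
  unfolding slp_def Let_def by (auto elim!: evenE oddE)

lemma monic_slp:
  assumes "S k j \<noteq> 0" shows "0 \<le> j \<and> lead_coeff (S k j) = 1 \<and> degree (S k j) = nat j"
proof -
  define a b where "a = (j - int k + 1) div 2" and "b = (j - int k) div 2 + int k"
  have "0 \<le> a" "0 \<le> b" using assms mop_eq_0 unfolding slp_eq_mop a_def[symmetric] b_def[symmetric]
    by force+
  moreover have "a + b = j" unfolding a_def b_def by presburger
  ultimately show ?thesis
    using lead_coeff_mop[of a b] degree_mop[of a b]
    unfolding slp_eq_mop a_def[symmetric] b_def[symmetric] by (simp add: nat_add_distrib[symmetric])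
qed

lemma slp_nonzero: "int k \<le> j \<Longrightarrow> S k j \<noteq> 0"
  unfolding slp_eq_mop by (rule mop_nonzero) presburger+

lemma monic_x_mult:
  fixes p :: "'a::comm_ring_1 poly"
  assumes "lead_coeff p = 1" shows "lead_coeff ([:0, 1:] * p) = 1" "degree ([:0, 1:] * p) = Suc (degree p)"
  using assms by (auto simp: degree_pCons_eq)

lemma three_term_expansion:
  assumes B: "lead_coeff B = 1" "degree B = N" and A: "lead_coeff A = 1" "degree A = Suc N"
    and orth: "orth \<alpha> \<beta>' ([:0, 1:] * B - A)" "orth \<alpha> \<beta>' B" "orth \<alpha> \<beta>' C" "orth \<alpha> \<beta>' D"
    and C: "\<alpha> + \<beta>' < N \<Longrightarrow> lead_coeff C = 1 \<and> Suc (degree C) = N"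
    and D: "\<alpha> + \<beta>' < N - 1 \<Longrightarrow> lead_coeff D = 1 \<and> Suc (degree D) = N - 1"
    and "N - 2 \<le> \<alpha> + \<beta>'"
  shows "\<exists>b g d. [:0, 1:] * B = A + smult b B + smult g C + smult d D"
proof -
  let ?L = "\<alpha> + \<beta>'"
  have "degree_below ([:0, 1:] * B - A) (max ?L (Suc N))"
    using monic_x_mult[OF B(1)] B A by (intro degree_below_mono[OF degree_below_monic_diff]) auto
  then obtain b where "degree_below ([:0, 1:] * B - A - smult b B) (max ?L (Suc N - 1))"
    using degree_below_reduce_max[of _ ?L "Suc N" B] B by blast
  then obtain g where "degree_below ([:0, 1:] * B - A - smult b B - smult g C) (max ?L (N - 1))"
    using degree_below_reduce_max[of _ ?L N C] C by auto
  then obtain d where "degree_below ([:0, 1:] * B - A - smult b B - smult g C - smult d D)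
      (max ?L (N - 1 - 1))"
    using degree_below_reduce_max[of _ ?L "N - 1" D] D by blast
  moreover have "max ?L (N - 1 - 1) = ?L" using \<open>N - 2 \<le> ?L\<close> by simp
  moreover have "orth \<alpha> \<beta>' ([:0, 1:] * B - A - smult b B - smult g C - smult d D)"
    using orth_diff[OF orth_diff[OF orth_diff[OF orth(1) orth_smult[OF orth(2)]]
          orth_smult[OF orth(3)]] orth_smult[OF orth(4)]] .
  ultimately have "[:0, 1:] * B - A - smult b B - smult g C - smult d D = 0"
    by (metis orth_degree_below_eq_0)
  then show ?thesis by (intro exI[of _ b] exI[of _ g] exI[of _ d]) (simp add: algebra_simps)
qed

lemma slp_recurrence_exists:
  assumes "k \<le> n"
  shows "\<exists>b g d. [:0, 1:] * S k (int n) = S k (int n + 1) + smult b (S k (int n))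
                   + smult g (S k (int n - 1)) + smult d (S k (int n - 2))"
proof -
  define a b where "a = (int n - int k + 1) div 2" and "b = (int n - int k) div 2 + int k"
  have ab: "0 \<le> a" "int k \<le> b" "a + b = int n" "b - int k \<le> a" "a \<le> b - int k + 1"
    using assms unfolding a_def b_def by presburger+
  have S: "S k (int n) = P a b" "S k (int n + 1) = P (b - int k + 1) (a + int k)"
    "S k (int n - 1) = P (b - int k) (a + int k - 1)" "S k (int n - 2) = P (a - 1) (b - 1)"
    unfolding slp_eq_mop a_def b_def by (intro arg_cong2[where f = P]; presburger)+
  define \<alpha> \<beta>' where "\<alpha> = nat a - 1" and "\<beta>' = nat b - 1"
  show ?thesis unfolding S
  proof (rule three_term_expansion)
    show "lead_coeff (P a b) = 1" "degree (P a b) = n" using monic_mop[of a b n] ab by auto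
    show "lead_coeff (P (b - int k + 1) (a + int k)) = 1" "degree (P (b - int k + 1) (a + int k)) = Suc n"
      using monic_mop[of "b - int k + 1" "a + int k" "Suc n"] ab by auto
    show "orth \<alpha> \<beta>' ([:0, 1:] * P a b - P (b - int k + 1) (a + int k))"
      unfolding \<alpha>_def \<beta>'_def using ab
      by (intro orth_diff multi_orth_x_mult[OF orth_mop] orth_mop_mono) linarith+
    show "orth \<alpha> \<beta>' (P a b)" "orth \<alpha> \<beta>' (P (b - int k) (a + int k - 1))" "orth \<alpha> \<beta>' (P (a - 1) (b - 1))"
      unfolding \<alpha>_def \<beta>'_def using ab by (intro orth_mop_mono; linarith)+
    show "\<alpha> + \<beta>' < n \<Longrightarrow> lead_coeff (P (b - int k) (a + int k - 1)) = 1
        \<and> Suc (degree (P (b - int k) (a + int k - 1))) = n"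
      unfolding \<alpha>_def \<beta>'_def using monic_mop[of "b - int k" "a + int k - 1" "n - 1"] ab by linarith
    show "\<alpha> + \<beta>' < n - 1 \<Longrightarrow> lead_coeff (P (a - 1) (b - 1)) = 1
        \<and> Suc (degree (P (a - 1) (b - 1))) = n - 1"
      unfolding \<alpha>_def \<beta>'_def using monic_mop[of "a - 1" "b - 1" "n - 2"] ab by linarith
    show "n - 2 \<le> \<alpha> + \<beta>'" unfolding \<alpha>_def \<beta>'_def using ab by linarith
  qed
qed

lemma slp_recurrence_unique:
  assumes "k \<le> n"
    and "[:0, 1:] * S k (int n) = S k (int n + 1) + smult b (S k (int n))
                + smult g (S k (int n - 1)) + smult d (S k (int n - 2))"
    and "[:0, 1:] * S k (int n) = S k (int n + 1) + smult b' (S k (int n))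
                + smult g' (S k (int n - 1)) + smult d' (S k (int n - 2))"
  shows "b = b' \<and> (S k (int n - 1) \<noteq> 0 \<longrightarrow> g = g') \<and> (S k (int n - 2) \<noteq> 0 \<longrightarrow> d = d')"
proof (rule smult_combination_unique)
  show "smult b (S k (int n)) + smult g (S k (int n - 1)) + smult d (S k (int n - 2))
      = smult b' (S k (int n)) + smult g' (S k (int n - 1)) + smult d' (S k (int n - 2))"
    using assms(2,3) by (simp add: add.assoc)
  show B: "S k (int n) \<noteq> 0" using assms(1) by (simp add: slp_nonzero)
  show "Suc (degree (S k (int n - 1))) = degree (S k (int n))" if "S k (int n - 1) \<noteq> 0"
    using monic_slp[OF that] monic_slp[OF B] by (simp, arith)
  show "Suc (Suc (degree (S k (int n - 2)))) = degree (S k (int n))" if "S k (int n - 2) \<noteq> 0"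
    using monic_slp[OF that] monic_slp[OF B] by (simp, arith)
qed

lemma rec_coeffs_eqI:
  assumes "k \<le> n"
    and "[:0, 1:] * S k (int n) = S k (int n + 1) + smult b (S k (int n))
                + smult g (S k (int n - 1)) + smult d (S k (int n - 2))"
    and "S k (int n - 1) = 0 \<Longrightarrow> g = 0" "S k (int n - 2) = 0 \<Longrightarrow> d = 0"
  shows "rec_coeffs \<mu>1 \<mu>2 k n = (b, g, d)"
  unfolding rec_coeffs_def
proof (rule the_equality, goal_cases)
  case 1
  then show ?case using assms by simp
next
  case (2 x)
  obtain b' g' d' where x: "x = (b', g', d')" by (cases x)
  have "[:0, 1:] * S k (int n) = S k (int n + 1) + smult b' (S k (int n))
                + smult g' (S k (int n - 1)) + smult d' (S k (int n - 2))"
    and "S k (int n - 1) = 0 \<Longrightarrow> g' = 0" "S k (int n - 2) = 0 \<Longrightarrow> d' = 0"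
    using 2 unfolding x by simp_all
  then show ?case using slp_recurrence_unique[OF assms(1,2)] assms(3,4) unfolding x by metis
qed

lemma recurrence_coeffs_eq:
  assumes "k \<le> n"
    and "[:0, 1:] * S k (int n) = S k (int n + 1) + smult b (S k (int n))
                + smult g (S k (int n - 1)) + smult d (S k (int n - 2))"
  shows "\<beta> k n = b \<and> (S k (int n - 1) \<noteq> 0 \<longrightarrow> \<gamma> k n = g) \<and> (S k (int n - 2) \<noteq> 0 \<longrightarrow> \<delta> k n = d)"
proof -
  let ?g = "if S k (int n - 1) = 0 then 0 else g" and ?d = "if S k (int n - 2) = 0 then 0 else d"
  have "rec_coeffs \<mu>1 \<mu>2 k n = (b, ?g, ?d)"
    using assms by (intro rec_coeffs_eqI) auto
  then show ?thesis using assms(1) by (simp add: beta_def gamma_def delta_def)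
qed

lemma slp_recurrence:
  assumes "k \<le> n"
  shows "[:0, 1:] * S k (int n) = S k (int n + 1) + smult (\<beta> k n) (S k (int n))
           + smult (\<gamma> k n) (S k (int n - 1)) + smult (\<delta> k n) (S k (int n - 2))"
proof -
  obtain b g d where rel: "[:0, 1:] * S k (int n) = S k (int n + 1) + smult b (S k (int n))
                + smult g (S k (int n - 1)) + smult d (S k (int n - 2))"
    using slp_recurrence_exists[OF assms] by blast
  then have "smult (\<gamma> k n) (S k (int n - 1)) = smult g (S k (int n - 1))"
    "smult (\<delta> k n) (S k (int n - 2)) = smult d (S k (int n - 2))"
    using recurrence_coeffs_eq[OF assms rel] by (cases "S k (int n - 1) = 0"; cases "S k (int n - 2) = 0"; simp)+
  then show ?thesis using rel recurrence_coeffs_eq[OF assms rel] by simp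
qed

lemma monic_diff_expansion:
  assumes A: "lead_coeff A = 1" "degree A = Suc N" and A': "lead_coeff A' = 1" "degree A' = Suc N"
    and B: "lead_coeff B = 1" "degree B = N"
    and orth: "orth \<alpha> \<beta>' A" "orth \<alpha> \<beta>' A'" "orth \<alpha> \<beta>' B" and "\<alpha> + \<beta>' = N"
  shows "\<exists>a. A - A' = smult a B"
proof -
  have "degree_below (A - A' - smult (coeff (A - A') N) B) N"
    using A A' B by (intro degree_below_reduce degree_below_monic_diff) auto
  moreover have "orth \<alpha> \<beta>' (A - A' - smult (coeff (A - A') N) B)"
    using orth by (intro orth_diff orth_smult)
  ultimately have "A - A' - smult (coeff (A - A') N) B = 0"
    using orth_degree_below_eq_0 \<open>\<alpha> + \<beta>' = N\<close> by blast
  then show ?thesis by auto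
qed

lemma mop_step_diff:
  "P (int n + 1) (int n + int k) = P (int n) (int n + int k + 1) + smult (c k n) (P (int n) (int n + int k))"
proof -
  define B where "B = P (int n) (int n + int k)"
  have "\<exists>c0. P (int n + 1) (int n + int k) - P (int n) (int n + int k + 1) = smult c0 B"
    unfolding B_def
    using monic_mop[of "int n + 1" "int n + int k" "Suc (n + (n + k))"]
      monic_mop[of "int n" "int n + int k + 1" "Suc (n + (n + k))"] monic_mop[of "int n" "int n + int k" "n + (n + k)"]
    by (intro monic_diff_expansion[where \<alpha> = n and \<beta>' = "n + k" and N = "n + (n + k)"] orth_mop_mono) auto
  then obtain c0 where diff: "P (int n + 1) (int n + int k) - P (int n) (int n + int k + 1) = smult c0 B" ..
  have "B \<noteq> 0" unfolding B_def by (simp add: mop_nonzero)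
  have "c k n = c0" unfolding cc_def B_def[symmetric]
    using diff smult_right_cancel[OF \<open>B \<noteq> 0\<close>] by (intro the_equality) auto
  then show ?thesis using diff by (simp add: algebra_simps B_def)
qed

lemma mop_step_diff_pred:
  assumes "1 \<le> n"
  shows "P (int n) (int n + int k - 1)
           = P (int n - 1) (int n + int k) + smult (c k (n - 1)) (P (int n - 1) (int n + int k - 1))"
  using mop_step_diff[of "n - 1" k] assms by (simp add: algebra_simps)

lemma recurrence_at_even:
  "[:0, 1:] * P (int n) (int n + int k) = P (int n + 1) (int n + int k)
     + smult (\<beta> k (2*n+k)) (P (int n) (int n + int k)) + smult (\<gamma> k (2*n+k)) (P (int n) (int n + int k - 1))
     + smult (\<delta> k (2*n+k)) (P (int n - 1) (int n + int k - 1))"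
proof -
  have "S k (int (2*n+k)) = P (int n) (int n + int k)" "S k (int (2*n+k) + 1) = P (int n + 1) (int n + int k)"
    "S k (int (2*n+k) - 1) = P (int n) (int n + int k - 1)"
    "S k (int (2*n+k) - 2) = P (int n - 1) (int n + int k - 1)"
    unfolding slp_eq_mop by (intro arg_cong2[where f = P]; presburger)+
  then show ?thesis using slp_recurrence[of k "2*n+k"] by simp
qed

lemma recurrence_at_odd:
  "[:0, 1:] * P (int n + 1) (int n + int k) = P (int n + 1) (int n + int k + 1)
     + smult (\<beta> k (2*n+k+1)) (P (int n + 1) (int n + int k)) + smult (\<gamma> k (2*n+k+1)) (P (int n) (int n + int k))
     + smult (\<delta> k (2*n+k+1)) (P (int n) (int n + int k - 1))"
proof -
  have "S k (int (2*n+k+1)) = P (int n + 1) (int n + int k)"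
    "S k (int (2*n+k+1) + 1) = P (int n + 1) (int n + int k + 1)"
    "S k (int (2*n+k+1) - 1) = P (int n) (int n + int k)"
    "S k (int (2*n+k+1) - 2) = P (int n) (int n + int k - 1)"
    unfolding slp_eq_mop by (intro arg_cong2[where f = P]; presburger)+
  then show ?thesis using slp_recurrence[of k "2*n+k+1"] by simp
qed

lemma shifted_coeffs_at_even:
  assumes "1 \<le> n"
    and "[:0, 1:] * P (int n) (int n + int k) = P (int n) (int n + int k + 1)
      + smult b (P (int n) (int n + int k)) + smult g (P (int n - 1) (int n + int k))
      + smult d (P (int n - 1) (int n + int k - 1))"
  shows "\<beta> (k+1) (2*n+k) = b \<and> \<gamma> (k+1) (2*n+k) = g \<and> \<delta> (k+1) (2*n+k) = d"
proof -
  have S: "S (k+1) (int (2*n+k)) = P (int n) (int n + int k)"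
    "S (k+1) (int (2*n+k) + 1) = P (int n) (int n + int k + 1)"
    "S (k+1) (int (2*n+k) - 1) = P (int n - 1) (int n + int k)"
    "S (k+1) (int (2*n+k) - 2) = P (int n - 1) (int n + int k - 1)"
    unfolding slp_eq_mop by (intro arg_cong2[where f = P]; presburger)+
  have "P (int n - 1) (int n + int k) \<noteq> 0" "P (int n - 1) (int n + int k - 1) \<noteq> 0"
    using assms(1) by (simp_all add: mop_nonzero)
  then show ?thesis using recurrence_coeffs_eq[of "k+1" "2*n+k" b g d] assms unfolding S by simp
qed

lemma shifted_coeffs_at_odd:
  assumes "[:0, 1:] * P (int n) (int n + int k + 1) = P (int n + 1) (int n + int k + 1)
      + smult b (P (int n) (int n + int k + 1)) + smult g (P (int n) (int n + int k))
      + smult d (P (int n - 1) (int n + int k))"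
  shows "\<beta> (k+1) (2*n+k+1) = b \<and> \<gamma> (k+1) (2*n+k+1) = g \<and> (1 \<le> n \<longrightarrow> \<delta> (k+1) (2*n+k+1) = d)"
proof -
  have S: "S (k+1) (int (2*n+k+1)) = P (int n) (int n + int k + 1)"
    "S (k+1) (int (2*n+k+1) + 1) = P (int n + 1) (int n + int k + 1)"
    "S (k+1) (int (2*n+k+1) - 1) = P (int n) (int n + int k)"
    "S (k+1) (int (2*n+k+1) - 2) = P (int n - 1) (int n + int k)"
    unfolding slp_eq_mop by (intro arg_cong2[where f = P]; presburger)+
  have "P (int n) (int n + int k) \<noteq> 0" "1 \<le> n \<Longrightarrow> P (int n - 1) (int n + int k) \<noteq> 0"
    by (simp_all add: mop_nonzero)
  then show ?thesis using recurrence_coeffs_eq[of "k+1" "2*n+k+1" b g d] assms unfolding S by simp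
qed

lemma even_expansion:
  assumes "1 \<le> n"
  shows "[:0, 1:] * P (int n) (int n + int k) = P (int n) (int n + int k + 1)
     + smult (\<beta> k (2*n+k) + c k n) (P (int n) (int n + int k))
     + smult (\<gamma> k (2*n+k)) (P (int n - 1) (int n + int k))
     + smult (\<delta> k (2*n+k) + c k (n - 1) * \<gamma> k (2*n+k)) (P (int n - 1) (int n + int k - 1))"
  using recurrence_at_even[of n k] unfolding mop_step_diff mop_step_diff_pred[OF assms]
  by (simp add: algebra_simps smult_add_left smult_add_right)

lemma coeffs_shift_even:
  assumes "1 \<le> n"
  shows "\<beta> (k+1) (2*n+k) = \<beta> k (2*n+k) + c k n \<and> \<gamma> (k+1) (2*n+k) = \<gamma> k (2*n+k)
    \<and> \<delta> (k+1) (2*n+k) = \<delta> k (2*n+k) + c k (n - 1) * \<gamma> k (2*n+k)"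
  using shifted_coeffs_at_even[OF assms even_expansion[OF assms]] .

lemma beta_shift_initial: "\<beta> (k+1) k = \<beta> k k + c k 0"
proof -
  have r: "[:0, 1:] * P 0 (int k) - P 0 (int k + 1) - smult b (P 0 (int k))
      = smult (\<beta> k k + c k 0 - b) (P 0 (int k)) + smult (\<gamma> k k) (P 0 (int k - 1))" for b
    using recurrence_at_even[of 0 k] mop_step_diff[of 0 k]
    by (simp add: mop_eq_0 algebra_simps smult_add_left smult_diff_left)
  have low: "degree_below (smult (\<gamma> k k) (P 0 (int k - 1))) k"
    using mop_eq_0[of 0 "int k - 1"] degree_mop[of 0 "int k - 1"]
    by (cases "k = 0") (auto intro!: degree_below_smult degree_below_of_degree)
  have unique: "b = \<beta> k k + c k 0"
    if "degree_below (smult (\<beta> k k + c k 0 - b) (P 0 (int k)) + smult (\<gamma> k k) (P 0 (int k - 1))) k" for b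
  proof -
    have "coeff (smult (\<beta> k k + c k 0 - b) (P 0 (int k)) + smult (\<gamma> k k) (P 0 (int k - 1))) k = 0"
      "coeff (smult (\<gamma> k k) (P 0 (int k - 1))) k = 0"
      using that low by (simp_all only: degree_below_def order_refl)
    moreover have "coeff (P 0 (int k)) k = 1" using lead_coeff_mop[of 0 "int k"] degree_mop[of 0 "int k"] by simp
    ultimately show ?thesis by auto
  qed
  have "\<beta> (k+1) k = (THE b. degree_below ([:0, 1:] * P 0 (int k) - P 0 (int k + 1) - smult b (P 0 (int k))) k)"
    unfolding beta_def Let_def degree_below_iff by simp
  also have "\<dots> = \<beta> k k + c k 0"
    unfolding r by (rule the_equality) (use low unique in simp_all)
  finally show ?thesis .
qed

lemma odd_expansion:
  "[:0, 1:] * P (int n) (int n + int k + 1) = P (int n + 1) (int n + int k + 1)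
     + smult (\<beta> k (2*n+k+1) - c k n) (P (int n) (int n + int k + 1))
     + smult (\<gamma> k (2*n+k+1) - c k n * (\<beta> k (2*n+k) - (\<beta> k (2*n+k+1) - c k n))) (P (int n) (int n + int k))
     + smult (\<delta> k (2*n+k+1) - c k n * \<gamma> k (2*n+k)) (P (int n) (int n + int k - 1))
     - smult (c k n * \<delta> k (2*n+k)) (P (int n - 1) (int n + int k - 1))" (is "_ = ?rhs")
proof -
  note step = mop_step_diff[of n k]
  have "[:0, 1:] * P (int n) (int n + int k + 1)
      = [:0, 1:] * P (int n + 1) (int n + int k) - smult (c k n) ([:0, 1:] * P (int n) (int n + int k))"
    unfolding step by (simp add: algebra_simps)
  also have "\<dots> = P (int n + 1) (int n + int k + 1) + smult (\<beta> k (2*n+k+1)) (P (int n + 1) (int n + int k))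
     + smult (\<gamma> k (2*n+k+1)) (P (int n) (int n + int k))
     + smult (\<delta> k (2*n+k+1)) (P (int n) (int n + int k - 1))
     - smult (c k n) (P (int n + 1) (int n + int k)
     + smult (\<beta> k (2*n+k)) (P (int n) (int n + int k)) + smult (\<gamma> k (2*n+k)) (P (int n) (int n + int k - 1))
     + smult (\<delta> k (2*n+k)) (P (int n - 1) (int n + int k - 1)))"
    by (simp only: recurrence_at_odd recurrence_at_even)
  also have "\<dots> = ?rhs"
    unfolding step by (simp add: algebra_simps smult_add_left smult_diff_left smult_add_right smult_diff_right)
  finally show ?thesis .
qed

lemma odd_residual:
  "smult (\<delta> k (2*n+k+1) - c k n * \<gamma> k (2*n+k)) (P (int n) (int n + int k - 1) - P (int n - 1) (int n + int k))
     = smult (c k n * \<delta> k (2*n+k)) (P (int n - 1) (int n + int k - 1))"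
proof -
  let ?d = "\<delta> k (2*n+k+1) - c k n * \<gamma> k (2*n+k)"
  define R where "R = smult ?d (P (int n) (int n + int k - 1) - P (int n - 1) (int n + int k))
    - smult (c k n * \<delta> k (2*n+k)) (P (int n - 1) (int n + int k - 1))"
  have "R = [:0, 1:] * P (int n) (int n + int k + 1) - P (int n + 1) (int n + int k + 1)
     - smult (\<beta> k (2*n+k+1) - c k n) (P (int n) (int n + int k + 1))
     - smult (\<gamma> k (2*n+k+1) - c k n * (\<beta> k (2*n+k) - (\<beta> k (2*n+k+1) - c k n))) (P (int n) (int n + int k))
     - smult ?d (P (int n - 1) (int n + int k))"
    unfolding R_def odd_expansion by (simp add: algebra_simps smult_diff_right)
  then have "orth (n - 1) (n + k) R"
    by (simp only:) (intro orth_diff orth_smult multi_orth_mono[OF multi_orth_x_mult[OF orth_mop]] orth_mop_mono; simp)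
  moreover have "degree_below R (n - 1 + (n + k))"
  proof -
    have "degree_below (P (int n) (int n + int k - 1) - P (int n - 1) (int n + int k)) (n - 1 + (n + k))"
    proof (cases "n = 0")
      case True
      then show ?thesis using mop_eq_0[of 0 "int k - 1"] degree_mop[of 0 "int k - 1"]
        by (cases "k = 0") (auto simp: mop_eq_0 intro: degree_below_of_degree)
    next
      case False
      then show ?thesis
        using monic_mop[of "int n" "int n + int k - 1" "n - 1 + (n + k)"]
          monic_mop[of "int n - 1" "int n + int k" "n - 1 + (n + k)"]
        by (intro degree_below_monic_diff) auto
    qed
    moreover have "degree_below (P (int n - 1) (int n + int k - 1)) (n - 1 + (n + k))"
      using mop_eq_0[of "int n - 1" "int n + int k - 1"] degree_mop[of "int n - 1" "int n + int k - 1"]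
      by (cases "n = 0") (auto intro: degree_below_of_degree)
    ultimately show ?thesis unfolding R_def by (intro degree_below_diff[OF degree_below_smult degree_below_smult])
  qed
  ultimately have "R = 0" by (rule orth_degree_below_eq_0)
  then show ?thesis unfolding R_def by simp
qed

lemma coeffs_shift_odd:
  "\<beta> (k+1) (2*n+k+1) = \<beta> k (2*n+k+1) - c k n
   \<and> \<gamma> (k+1) (2*n+k+1) = \<gamma> k (2*n+k+1) - c k n * (\<beta> k (2*n+k) - (\<beta> k (2*n+k+1) - c k n))
   \<and> (1 \<le> n \<longrightarrow> \<delta> (k+1) (2*n+k+1) = \<delta> k (2*n+k+1) - c k n * \<gamma> k (2*n+k))"
proof (rule shifted_coeffs_at_odd)
  show "[:0, 1:] * P (int n) (int n + int k + 1) = P (int n + 1) (int n + int k + 1)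
      + smult (\<beta> k (2*n+k+1) - c k n) (P (int n) (int n + int k + 1))
      + smult (\<gamma> k (2*n+k+1) - c k n * (\<beta> k (2*n+k) - (\<beta> k (2*n+k+1) - c k n))) (P (int n) (int n + int k))
      + smult (\<delta> k (2*n+k+1) - c k n * \<gamma> k (2*n+k)) (P (int n - 1) (int n + int k))"
    using odd_expansion[of n k] odd_residual[of k n] by (simp add: algebra_simps smult_diff_right)
qed

lemma gamma_initial_nonzero:
  assumes "1 \<le> k" shows "\<gamma> k k \<noteq> 0"
proof
  assume "\<gamma> k k = 0"
  then have "[:0, 1:] * P 0 (int k) = P 1 (int k) + smult (\<beta> k k) (P 0 (int k))"
    using recurrence_at_even[of 0 k] by (simp add: mop_eq_0)
  then have "orth (nat 0 - 1) (nat (int k)) ([:0, 1:] * P 0 (int k))"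
    by (simp only:) (intro orth_add orth_smult orth_mop_mono; simp)
  then show False using x_mop_not_orth[of 0 "int k"] assms by simp
qed

lemma shifted_delta_nonzero:
  assumes "1 \<le> n" shows "\<delta> k (2*n+k) + c k (n - 1) * \<gamma> k (2*n+k) \<noteq> 0"
proof
  assume "\<delta> k (2*n+k) + c k (n - 1) * \<gamma> k (2*n+k) = 0"
  then have "[:0, 1:] * P (int n) (int n + int k) = P (int n) (int n + int k + 1)
     + smult (\<beta> k (2*n+k) + c k n) (P (int n) (int n + int k))
     + smult (\<gamma> k (2*n+k)) (P (int n - 1) (int n + int k))"
    using even_expansion[OF assms, of k] by simp
  then have "orth (nat (int n) - 1) (nat (int n + int k)) ([:0, 1:] * P (int n) (int n + int k))"
    by (simp only:) (intro orth_add orth_smult orth_mop_mono; simp)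
  then show False using x_mop_not_orth[of "int n" "int n + int k"] assms by simp
qed

lemma beta_shift_even: "\<beta> (k+1) (2*n+k) = \<beta> k (2*n+k) + c k n"
  using beta_shift_initial[of k] coeffs_shift_even[of n k] by (cases n) auto

lemma cc_riccati:
  assumes "1 \<le> n"
  shows "c k n = c k (n - 1) * \<delta> k (2*n+k+1) / (\<delta> k (2*n+k) + c k (n - 1) * \<gamma> k (2*n+k))"
proof -
  have "smult ((\<delta> k (2*n+k+1) - c k n * \<gamma> k (2*n+k)) * c k (n - 1)) (P (int n - 1) (int n + int k - 1))
      = smult (c k n * \<delta> k (2*n+k)) (P (int n - 1) (int n + int k - 1))"
    using odd_residual[of k n] mop_step_diff_pred[OF assms, of k] by simp
  moreover have "P (int n - 1) (int n + int k - 1) \<noteq> 0" using assms by (simp add: mop_nonzero)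
  ultimately have "c k n * (\<delta> k (2*n+k) + c k (n - 1) * \<gamma> k (2*n+k)) = c k (n - 1) * \<delta> k (2*n+k+1)"
    by (simp add: smult_right_cancel algebra_simps)
  then show ?thesis using shifted_delta_nonzero[OF assms] by (simp add: eq_divide_eq)
qed

lemma cc_initial:
  assumes "1 \<le> k" shows "c k 0 = \<delta> k (k+1) / \<gamma> k k"
proof -
  have "smult (\<delta> k (k+1) - c k 0 * \<gamma> k k) (P 0 (int k - 1)) = 0"
    using odd_residual[of k 0] by (simp add: mop_eq_0)
  moreover have "P 0 (int k - 1) \<noteq> 0" using assms by (simp add: mop_nonzero)
  ultimately show ?thesis using gamma_initial_nonzero[OF assms] by (simp add: eq_divide_eq)
qed

end

theorem theorem2p2:
  fixes \<mu>1 \<mu>2 :: "real measure"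
  assumes "sets \<mu>1 = sets borel" and "sets \<mu>2 = sets borel"
    and "moments_finite \<mu>1" and "moments_finite \<mu>2"
    and "normal_system \<mu>1 \<mu>2"
  shows "\<forall>k::nat.
     (\<forall>n. beta \<mu>1 \<mu>2 (k+1) (2*n+k) = beta \<mu>1 \<mu>2 k (2*n+k) + cc \<mu>1 \<mu>2 k n)
   \<and> (\<forall>n\<ge>1. gamma \<mu>1 \<mu>2 (k+1) (2*n+k) = gamma \<mu>1 \<mu>2 k (2*n+k))
   \<and> (\<forall>n\<ge>1. delta \<mu>1 \<mu>2 (k+1) (2*n+k) =
              delta \<mu>1 \<mu>2 k (2*n+k) + cc \<mu>1 \<mu>2 k (n-1) * gamma \<mu>1 \<mu>2 k (2*n+k))
   \<and> (\<forall>n. beta \<mu>1 \<mu>2 (k+1) (2*n+k+1) = beta \<mu>1 \<mu>2 k (2*n+k+1) - cc \<mu>1 \<mu>2 k n)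
   \<and> (\<forall>n. gamma \<mu>1 \<mu>2 (k+1) (2*n+k+1) = gamma \<mu>1 \<mu>2 k (2*n+k+1)
              - cc \<mu>1 \<mu>2 k n * (beta \<mu>1 \<mu>2 k (2*n+k) - beta \<mu>1 \<mu>2 (k+1) (2*n+k+1)))
   \<and> (\<forall>n\<ge>1. delta \<mu>1 \<mu>2 (k+1) (2*n+k+1) =
              delta \<mu>1 \<mu>2 k (2*n+k+1) - cc \<mu>1 \<mu>2 k n * gamma \<mu>1 \<mu>2 k (2*n+k))
   \<and> (\<forall>n\<ge>1. cc \<mu>1 \<mu>2 k n = cc \<mu>1 \<mu>2 k (n-1) * delta \<mu>1 \<mu>2 k (2*n+k+1)
              / (delta \<mu>1 \<mu>2 k (2*n+k) + cc \<mu>1 \<mu>2 k (n-1) * gamma \<mu>1 \<mu>2 k (2*n+k)))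
   \<and> (k \<ge> 1 \<longrightarrow> cc \<mu>1 \<mu>2 k 0 = delta \<mu>1 \<mu>2 k (k+1) / gamma \<mu>1 \<mu>2 k k)"
proof -
  interpret normal_pair \<mu>1 \<mu>2 using assms(3-5) by unfold_locales
  show ?thesis
    using beta_shift_even coeffs_shift_even coeffs_shift_odd cc_riccati cc_initial by simp
qed

end
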